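(* Let $\lambda\in(1,2]$ and $\tau_0\in(0,2]$. There exist universal constants $c_1,c_2>0$ such that for every estimator $\widehat u=\widehat u(M,b)\in\mathcal S^{d-1}$ (measurable function of $(M,b)$), $$\mathbb{E}_{M,b}\,\mathbb{E}\big[\langle\widehat u,u\rangle^2\mid M,b\big]\le\sqrt{\big(\mathbb{E}\|u\|_2^2\big)^2-\mathbb{E}_{M,b}\big[\mathrm{MMSE}_{d,\lambda}(uu^\top\mid M,b)\big]}+c_1d^{-c_2}.$$
   Context: $W$ is a $d\times d$ symmetric random matrix with independent entries $W_{ii}\sim\mathcal N(0,2/d)$, $W_{ij}\sim\mathcal N(0,1/d)$ for $i<j$; $u\sim\mathcal N(0,I_d/d)$ independent; $M=\lambda uu^\top+W$; $b=\sqrt{\tau_0}u+z$, $z\sim\mathcal N(0,I_d/d)$ independent. $\mathrm{MMSE}_{d,\lambda}(uu^\top\mid M,b):=\mathbb{E}_u\big[\|uu^\top-\mathbb{E}[uu^\top\mid M,b]\|_F^2\mid M,b\big]$. *)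

theory Defs
  imports "HOL-Probability.Probability"
begin

definition gauss :: "real \<Rightarrow> real measure" where
  "gauss s = density lborel (normal_density 0 s)"

text \<open>Sample point: (u, z, w) with u, z in R^d (coordinates 0..d-1) and
  w the upper-triangular entries (i \<le> j) of the symmetric noise matrix W.\<close>
type_synonym sample = "(nat \<Rightarrow> real) \<times> (nat \<Rightarrow> real) \<times> (nat \<times> nat \<Rightarrow> real)"

definition upper_idx :: "nat \<Rightarrow> (nat \<times> nat) set" where
  "upper_idx d = {p. fst p \<le> snd p \<and> snd p < d}"

definition spk_space :: "nat \<Rightarrow> sample measure" where
  "spk_space d =
     (PiM {..<d} (\<lambda>_. gauss (sqrt (1 / real d)))) \<Otimes>\<^sub>M
     ((PiM {..<d} (\<lambda>_. gauss (sqrt (1 / real d)))) \<Otimes>\<^sub>M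
      (PiM (upper_idx d) (\<lambda>p. gauss (if fst p = snd p then sqrt (2 / real d) else sqrt (1 / real d)))))"

definition uvec :: "sample \<Rightarrow> nat \<Rightarrow> real" where
  "uvec \<omega> = fst \<omega>"

definition zvec :: "sample \<Rightarrow> nat \<Rightarrow> real" where
  "zvec \<omega> = fst (snd \<omega>)"

definition Wmat :: "sample \<Rightarrow> nat \<Rightarrow> nat \<Rightarrow> real" where
  "Wmat \<omega> i j = (if i \<le> j then snd (snd \<omega>) (i, j) else snd (snd \<omega>) (j, i))"

definition Mmat :: "nat \<Rightarrow> real \<Rightarrow> sample \<Rightarrow> nat \<Rightarrow> nat \<Rightarrow> real" where
  "Mmat d lam \<omega> = (\<lambda>i\<in>{..<d}. \<lambda>j\<in>{..<d}. lam * uvec \<omega> i * uvec \<omega> j + Wmat \<omega> i j)"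

definition bvec :: "nat \<Rightarrow> real \<Rightarrow> sample \<Rightarrow> nat \<Rightarrow> real" where
  "bvec d tau0 \<omega> = (\<lambda>i\<in>{..<d}. sqrt tau0 * uvec \<omega> i + zvec \<omega> i)"

definition obs_space :: "nat \<Rightarrow> ((nat \<Rightarrow> nat \<Rightarrow> real) \<times> (nat \<Rightarrow> real)) measure" where
  "obs_space d = (PiM {..<d} (\<lambda>_. PiM {..<d} (\<lambda>_. borel))) \<Otimes>\<^sub>M (PiM {..<d} (\<lambda>_. borel))"

definition obs :: "nat \<Rightarrow> real \<Rightarrow> real \<Rightarrow> sample \<Rightarrow> (nat \<Rightarrow> nat \<Rightarrow> real) \<times> (nat \<Rightarrow> real)" where
  "obs d lam tau0 \<omega> = (Mmat d lam \<omega>, bvec d tau0 \<omega>)"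

definition obs_sigma :: "nat \<Rightarrow> real \<Rightarrow> real \<Rightarrow> sample measure" where
  "obs_sigma d lam tau0 = vimage_algebra (space (spk_space d)) (obs d lam tau0) (obs_space d)"

definition MMSE :: "nat \<Rightarrow> real \<Rightarrow> real \<Rightarrow> sample \<Rightarrow> real" where
  "MMSE d lam tau0 =
     real_cond_exp (spk_space d) (obs_sigma d lam tau0)
       (\<lambda>\<omega>. \<Sum>i<d. \<Sum>j<d. (uvec \<omega> i * uvec \<omega> j
            - real_cond_exp (spk_space d) (obs_sigma d lam tau0) (\<lambda>\<omega>'. uvec \<omega>' i * uvec \<omega>' j) \<omega>)\<^sup>2)"

end

theory Submission
  imports Defs
begin

text \<open>For an estimate \<open>h\<close> that is a unit vector measurable in the observations,
  \<open>E[\<langle>h,u\<rangle>\<^sup>2 | M,b] = \<Sum>\<^sub>i\<^sub>j h\<^sub>i h\<^sub>j Q\<^sub>i\<^sub>j\<close> with \<open>Q = E[uu\<^sup>T | M,b]\<close>, which is at most \<open>\<parallel>Q\<parallel>\<^sub>F\<close>; averaging,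
  \<open>E \<parallel>Q\<parallel>\<^sub>F \<le> sqrt (E \<parallel>Q\<parallel>\<^sub>F\<^sup>2)\<close>, and by Pythagoras for conditional expectations
  \<open>E \<parallel>Q\<parallel>\<^sub>F\<^sup>2 = E \<parallel>uu\<^sup>T\<parallel>\<^sub>F\<^sup>2 - E MMSE\<close>. For \<open>u \<sim> N(0, I/d)\<close> one has
  \<open>E \<parallel>uu\<^sup>T\<parallel>\<^sub>F\<^sup>2 = E \<parallel>u\<parallel>\<^sup>4 = 1 + 2/d\<close> while \<open>(E \<parallel>u\<parallel>\<^sup>2)\<^sup>2 = 1\<close>, and replacing one by the other
  costs at most \<open>2 sqrt (2/d)\<close>. The argument uses nothing about \<open>\<lambda>\<close> or \<open>\<tau>\<^sub>0\<close>, so their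
  range restrictions in the theorem are never invoked.\<close>

text \<open>No sign condition on \<open>S\<close>: \<open>sqrt\<close> is odd on negative arguments, and in the application
  \<open>S - \<delta> = 1 - E MMSE\<close> may be negative.\<close>

lemma sqrt_le_sqrt_diff_add:
  fixes S \<delta> :: real
  assumes "0 \<le> \<delta>"
  shows "sqrt S \<le> sqrt (S - \<delta>) + 2 * sqrt \<delta>"
proof -
  have flip: "sqrt (S - \<delta>) = - sqrt (\<delta> - S)" "sqrt S = - sqrt (- S)"
    using real_sqrt_minus[of "\<delta> - S"] real_sqrt_minus[of S] by simp_all
  have "0 \<le> sqrt \<delta>" using assms by simp
  consider "\<delta> \<le> S" | "0 \<le> S" "S < \<delta>" | "S < 0" by linarith
  then show ?thesis
  proof cases
    case 1
    then have "sqrt S \<le> sqrt (S - \<delta>) + sqrt \<delta>"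
      using sqrt_add_le_add_sqrt[of "S - \<delta>" \<delta>] assms by simp
    then show ?thesis using \<open>0 \<le> sqrt \<delta>\<close> by linarith
  next
    case 2
    then have "sqrt S \<le> sqrt \<delta>" "sqrt (\<delta> - S) \<le> sqrt \<delta>" by simp_all
    then show ?thesis using flip(1) by linarith
  next
    case 3
    then have "sqrt (\<delta> - S) \<le> sqrt \<delta> + sqrt (- S)"
      using sqrt_add_le_add_sqrt[of \<delta> "- S"] assms by simp
    then show ?thesis using flip \<open>0 \<le> sqrt \<delta>\<close> by linarith
  qed
qed

text \<open>\<open>sqrt S\<close> is the infimum of \<open>(t + S/t)/2\<close> over \<open>t > 0\<close>; bounding by this family
  (pointwise AM-GM with a free weight) replaces Cauchy-Schwarz and Jensen below.\<close>

lemma le_sqrt_if_forall_le_amgm: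
  fixes x S :: real
  assumes "0 \<le> S" and amgm: "\<And>t. 0 < t \<Longrightarrow> x \<le> (t + S / t) / 2"
  shows "x \<le> sqrt S"
proof (cases "S = 0")
  case True
  have "x \<le> 0"
  proof (rule ccontr)
    assume "\<not> x \<le> 0"
    then show False using amgm[of x] True by simp
  qed
  then show ?thesis using True by simp
next
  case False
  then have "0 < sqrt S" using assms(1) by simp
  moreover have "S / sqrt S = sqrt S" using assms(1) by (simp add: real_div_sqrt)
  ultimately show ?thesis using amgm[of "sqrt S"] by simp
qed

lemma integrable_mult_if_square_integrable:
  fixes f g :: "'a \<Rightarrow> real"
  assumes [measurable]: "f \<in> borel_measurable M" "g \<in> borel_measurable M"
    and "integrable M (\<lambda>x. (f x)\<^sup>2)" "integrable M (\<lambda>x. (g x)\<^sup>2)"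
  shows "integrable M (\<lambda>x. f x * g x)"
proof (rule Bochner_Integration.integrable_bound[OF Bochner_Integration.integrable_add[OF assms(3,4)]])
  show "AE x in M. norm (f x * g x) \<le> norm ((f x)\<^sup>2 + (g x)\<^sup>2)"
  proof (intro AE_I2)
    fix x
    have "2 * (\<bar>f x\<bar> * \<bar>g x\<bar>) \<le> (f x)\<^sup>2 + (g x)\<^sup>2"
      using sum_squares_bound[of "\<bar>f x\<bar>" "\<bar>g x\<bar>"] by simp
    moreover have "0 \<le> \<bar>f x\<bar> * \<bar>g x\<bar>" by simp
    ultimately have "\<bar>f x\<bar> * \<bar>g x\<bar> \<le> (f x)\<^sup>2 + (g x)\<^sup>2" by linarith
    then show "norm (f x * g x) \<le> norm ((f x)\<^sup>2 + (g x)\<^sup>2)"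
      by (simp add: abs_mult)
  qed
qed simp

lemma (in sigma_finite_subalgebra) integral_cond_exp_residual_square:
  fixes X :: "'a \<Rightarrow> real"
  assumes "integrable M X" "integrable M (\<lambda>x. (X x)\<^sup>2)"
  shows "integrable M (\<lambda>x. (real_cond_exp M F X x)\<^sup>2)"
    and "integrable M (\<lambda>x. (X x - real_cond_exp M F X x)\<^sup>2)"
    and "(\<integral>x. (X x - real_cond_exp M F X x)\<^sup>2 \<partial>M)
           = (\<integral>x. (X x)\<^sup>2 \<partial>M) - (\<integral>x. (real_cond_exp M F X x)\<^sup>2 \<partial>M)"
proof -
  let ?Q = "real_cond_exp M F X"
  have [measurable]: "X \<in> borel_measurable M" using assms(1) by auto
  show Q2: "integrable M (\<lambda>x. (?Q x)\<^sup>2)"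
    by (rule integrable_convex_cond_exp[where I=UNIV and q="\<lambda>x. x\<^sup>2"])
       (auto simp: assms convex_power2)
  have QX: "integrable M (\<lambda>x. ?Q x * X x)"
    using assms(2) Q2 by (intro integrable_mult_if_square_integrable) auto
  have "(\<integral>x. ?Q x * ?Q x \<partial>M) = (\<integral>x. ?Q x * X x \<partial>M)"
    using real_cond_exp_intg(2)[OF QX] by simp
  moreover have "(\<lambda>x. (X x - ?Q x)\<^sup>2) = (\<lambda>x. (X x)\<^sup>2 - 2 * (?Q x * X x) + (?Q x)\<^sup>2)"
    by (simp add: power2_eq_square algebra_simps)
  ultimately show "integrable M (\<lambda>x. (X x - ?Q x)\<^sup>2)"
    and "(\<integral>x. (X x - ?Q x)\<^sup>2 \<partial>M) = (\<integral>x. (X x)\<^sup>2 \<partial>M) - (\<integral>x. (?Q x)\<^sup>2 \<partial>M)"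
    using assms(2) QX Q2 by (simp_all add: power2_eq_square)
qed

lemma abs_mult_le_1_if_sum_squares_eq_1:
  fixes h :: "'i \<Rightarrow> real"
  assumes "finite I" "(\<Sum>k\<in>I. (h k)\<^sup>2) = 1" "i \<in> I" "j \<in> I"
  shows "\<bar>h i * h j\<bar> \<le> 1"
proof -
  have "(h k)\<^sup>2 \<le> 1" if "k \<in> I" for k
    using member_le_sum[of k I "\<lambda>k. (h k)\<^sup>2"] assms that by simp
  then show ?thesis
    using assms by (simp add: abs_mult abs_square_le_1 mult_le_one)
qed

lemma sum_unit_bilinear_le_amgm:
  fixes h :: "'i \<Rightarrow> real" and q :: "'i \<Rightarrow> 'i \<Rightarrow> real"
  assumes unit: "(\<Sum>i\<in>I. (h i)\<^sup>2) = 1" and "0 < t"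
  shows "(\<Sum>i\<in>I. \<Sum>j\<in>I. h i * h j * q i j) \<le> (t + (\<Sum>i\<in>I. \<Sum>j\<in>I. (q i j)\<^sup>2) / t) / 2"
proof -
  have amgm: "h i * h j * q i j \<le> (t * (h i * h j)\<^sup>2 + (q i j)\<^sup>2 / t) / 2" for i j
  proof -
    have "0 \<le> (t * (h i * h j) - q i j)\<^sup>2 / t" using \<open>0 < t\<close> by simp
    also have "\<dots> = t * (h i * h j)\<^sup>2 - 2 * (h i * h j * q i j) + (q i j)\<^sup>2 / t"
      using \<open>0 < t\<close> by (simp add: power2_eq_square field_simps)
    finally show ?thesis by simp
  qed
  have "(\<Sum>i\<in>I. \<Sum>j\<in>I. h i * h j * q i j)
      \<le> (\<Sum>i\<in>I. \<Sum>j\<in>I. (t * (h i * h j)\<^sup>2 + (q i j)\<^sup>2 / t) / 2)"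
    by (intro sum_mono amgm)
  also have "\<dots> = (t * (\<Sum>i\<in>I. \<Sum>j\<in>I. (h i * h j)\<^sup>2) + (\<Sum>i\<in>I. \<Sum>j\<in>I. (q i j)\<^sup>2) / t) / 2"
    by (simp only: sum_divide_distrib[symmetric] sum.distrib sum_distrib_left add_divide_distrib)
  also have "(\<Sum>i\<in>I. \<Sum>j\<in>I. (h i * h j)\<^sup>2) = (\<Sum>i\<in>I. (h i)\<^sup>2) * (\<Sum>j\<in>I. (h j)\<^sup>2)"
    by (simp add: sum_product power_mult_distrib)
  finally show ?thesis using unit by simp
qed

context prob_space
begin

lemma integral_unit_bilinear_le_sqrt:
  fixes h :: "'i \<Rightarrow> 'a \<Rightarrow> real" and Q :: "'i \<Rightarrow> 'i \<Rightarrow> 'a \<Rightarrow> real"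
  assumes "finite I"
    and h: "\<And>i. i \<in> I \<Longrightarrow> h i \<in> borel_measurable M"
    and unit: "\<And>x. x \<in> space M \<Longrightarrow> (\<Sum>i\<in>I. (h i x)\<^sup>2) = 1"
    and Q: "\<And>i j. i \<in> I \<Longrightarrow> j \<in> I \<Longrightarrow> Q i j \<in> borel_measurable M"
    and Q2: "\<And>i j. i \<in> I \<Longrightarrow> j \<in> I \<Longrightarrow> integrable M (\<lambda>x. (Q i j x)\<^sup>2)"
  shows "\<And>i j. i \<in> I \<Longrightarrow> j \<in> I \<Longrightarrow> integrable M (\<lambda>x. h i x * h j x * Q i j x)"
    and "(\<integral>x. (\<Sum>i\<in>I. \<Sum>j\<in>I. h i x * h j x * Q i j x) \<partial>M)
           \<le> sqrt (\<Sum>i\<in>I. \<Sum>j\<in>I. \<integral>x. (Q i j x)\<^sup>2 \<partial>M)"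
proof -
  have hhQ: "integrable M (\<lambda>x. h i x * h j x * Q i j x)" if "i \<in> I" "j \<in> I" for i j
  proof (rule Bochner_Integration.integrable_bound)
    show "integrable M (Q i j)"
      using square_integrable_imp_integrable[OF Q[OF that] Q2[OF that]] .
    show "(\<lambda>x. h i x * h j x * Q i j x) \<in> borel_measurable M"
      using h Q that by measurable
    show "AE x in M. norm (h i x * h j x * Q i j x) \<le> norm (Q i j x)"
    proof (rule AE_I2)
      fix x assume "x \<in> space M"
      then have "\<bar>h i x * h j x\<bar> \<le> 1"
        using abs_mult_le_1_if_sum_squares_eq_1[OF \<open>finite I\<close> unit that] by blast
      then show "norm (h i x * h j x * Q i j x) \<le> norm (Q i j x)"
        by (simp add: abs_mult mult_left_le_one_le)
    qed
  qed
  then show "\<And>i j. i \<in> I \<Longrightarrow> j \<in> I \<Longrightarrow> integrable M (\<lambda>x. h i x * h j x * Q i j x)" .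
  let ?S = "\<Sum>i\<in>I. \<Sum>j\<in>I. \<integral>x. (Q i j x)\<^sup>2 \<partial>M"
  show "(\<integral>x. (\<Sum>i\<in>I. \<Sum>j\<in>I. h i x * h j x * Q i j x) \<partial>M) \<le> sqrt ?S"
  proof (rule le_sqrt_if_forall_le_amgm)
    show "0 \<le> ?S" by (intro sum_nonneg integral_nonneg_AE) auto
    fix t :: real assume "0 < t"
    have pointwise: "(\<Sum>i\<in>I. \<Sum>j\<in>I. h i x * h j x * Q i j x)
        \<le> (t + (\<Sum>i\<in>I. \<Sum>j\<in>I. (Q i j x)\<^sup>2) / t) / 2" if "x \<in> space M" for x
      using sum_unit_bilinear_le_amgm[OF unit[OF that] \<open>0 < t\<close>] .
    have "(\<integral>x. (\<Sum>i\<in>I. \<Sum>j\<in>I. h i x * h j x * Q i j x) \<partial>M)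
        \<le> (\<integral>x. (t + (\<Sum>i\<in>I. \<Sum>j\<in>I. (Q i j x)\<^sup>2) / t) / 2 \<partial>M)"
      using hhQ Q2 pointwise by (intro integral_mono) auto
    also have "\<dots> = (t + ?S / t) / 2"
      using Q2 by (simp add: prob_space)
    finally show "(\<integral>x. (\<Sum>i\<in>I. \<Sum>j\<in>I. h i x * h j x * Q i j x) \<partial>M) \<le> (t + ?S / t) / 2" .
  qed
qed

lemma integral_cond_exp_overlap_le_sqrt:
  fixes h :: "'i \<Rightarrow> 'a \<Rightarrow> real" and X :: "'i \<Rightarrow> 'i \<Rightarrow> 'a \<Rightarrow> real"
  assumes "subalgebra M F" "finite I"
    and h: "\<And>i. i \<in> I \<Longrightarrow> h i \<in> borel_measurable F"
    and unit: "\<And>x. x \<in> space M \<Longrightarrow> (\<Sum>i\<in>I. (h i x)\<^sup>2) = 1"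
    and X: "\<And>i j. i \<in> I \<Longrightarrow> j \<in> I \<Longrightarrow> X i j \<in> borel_measurable M"
    and X2: "\<And>i j. i \<in> I \<Longrightarrow> j \<in> I \<Longrightarrow> integrable M (\<lambda>x. (X i j x)\<^sup>2)"
  shows "(\<integral>x. real_cond_exp M F (\<lambda>x. \<Sum>i\<in>I. \<Sum>j\<in>I. h i x * h j x * X i j x) x \<partial>M)
    \<le> sqrt ((\<Sum>i\<in>I. \<Sum>j\<in>I. \<integral>x. (X i j x)\<^sup>2 \<partial>M)
        - (\<integral>x. real_cond_exp M F
              (\<lambda>x. \<Sum>i\<in>I. \<Sum>j\<in>I. (X i j x - real_cond_exp M F (X i j) x)\<^sup>2) x \<partial>M))"
proof -
  interpret sigma_finite_subalgebra M F
    using \<open>subalgebra M F\<close> finite_measure_axioms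
    by (intro finite_measure_subalgebra_is_sigma_finite)
       (simp add: finite_measure_subalgebra_def finite_measure_subalgebra_axioms_def)
  define Q where "Q i j = real_cond_exp M F (X i j)" for i j
  have XI: "integrable M (X i j)" if "i \<in> I" "j \<in> I" for i j
    using square_integrable_imp_integrable[OF X[OF that] X2[OF that]] .
  have Q2: "integrable M (\<lambda>x. (Q i j x)\<^sup>2)"
    and residual: "integrable M (\<lambda>x. (X i j x - Q i j x)\<^sup>2)"
      "(\<integral>x. (X i j x - Q i j x)\<^sup>2 \<partial>M) = (\<integral>x. (X i j x)\<^sup>2 \<partial>M) - (\<integral>x. (Q i j x)\<^sup>2 \<partial>M)"
    if "i \<in> I" "j \<in> I" for i j
    using integral_cond_exp_residual_square[OF XI[OF that] X2[OF that]] by (simp_all add: Q_def)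
  have hM: "h i \<in> borel_measurable M" if "i \<in> I" for i
    using measurable_from_subalg[OF subalg h[OF that]] .
  note bilinear = integral_unit_bilinear_le_sqrt[OF \<open>finite I\<close>, where h=h]
  have QM: "Q i j \<in> borel_measurable M" for i j
    unfolding Q_def by simp
  have hhX: "integrable M (\<lambda>x. h i x * h j x * X i j x)" if "i \<in> I" "j \<in> I" for i j
    using bilinear(1)[where Q=X] hM unit X X2 that by blast
  have pull_out: "(\<integral>x. h i x * h j x * X i j x \<partial>M) = (\<integral>x. h i x * h j x * Q i j x \<partial>M)"
    if "i \<in> I" "j \<in> I" for i j
  proof -
    have "(\<lambda>x. h i x * h j x) \<in> borel_measurable F"
      using h[OF that(1)] h[OF that(2)] by measurable
    then show ?thesis
      using real_cond_exp_intg(2)[where f="\<lambda>x. h i x * h j x" and g="X i j"] hhX[OF that] X[OF that]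
      by (simp add: Q_def)
  qed
  have "(\<integral>x. real_cond_exp M F (\<lambda>x. \<Sum>i\<in>I. \<Sum>j\<in>I. h i x * h j x * X i j x) x \<partial>M)
      = (\<Sum>i\<in>I. \<Sum>j\<in>I. \<integral>x. h i x * h j x * X i j x \<partial>M)"
    using hhX by (simp add: real_cond_exp_int(2) Bochner_Integration.integral_sum)
  also have "\<dots> = (\<integral>x. (\<Sum>i\<in>I. \<Sum>j\<in>I. h i x * h j x * Q i j x) \<partial>M)"
    using pull_out bilinear(1)[where Q=Q] hM unit QM Q2
    by (simp add: Bochner_Integration.integral_sum)
  also have "\<dots> \<le> sqrt (\<Sum>i\<in>I. \<Sum>j\<in>I. \<integral>x. (Q i j x)\<^sup>2 \<partial>M)"
    using bilinear(2)[where Q=Q] hM unit QM Q2 by blast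
  also have "(\<Sum>i\<in>I. \<Sum>j\<in>I. \<integral>x. (Q i j x)\<^sup>2 \<partial>M)
      = (\<Sum>i\<in>I. \<Sum>j\<in>I. \<integral>x. (X i j x)\<^sup>2 \<partial>M)
        - (\<integral>x. real_cond_exp M F (\<lambda>x. \<Sum>i\<in>I. \<Sum>j\<in>I. (X i j x - Q i j x)\<^sup>2) x \<partial>M)"
    using residual
    by (simp add: real_cond_exp_int(2) Bochner_Integration.integral_sum sum_subtractf)
  finally show ?thesis by (simp add: Q_def)
qed

end

lemma sets_gauss [measurable_cong]: "sets (gauss s) = sets borel"
  by (simp add: gauss_def)

lemma prob_space_gauss: "0 < s \<Longrightarrow> prob_space (gauss s)"
  unfolding gauss_def by (rule prob_space_normal_density)

lemma gauss_even_moment: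
  assumes "0 < s"
  shows "integrable (gauss s) (\<lambda>y. y ^ (2 * k))"
    and "(\<integral>y. y ^ (2 * k) \<partial>gauss s) = fact (2 * k) / ((2 / s\<^sup>2) ^ k * fact k)"
proof -
  have "has_bochner_integral lborel (\<lambda>y. normal_density 0 s y * y ^ (2 * k))
      (fact (2 * k) / ((2 / s\<^sup>2) ^ k * fact k))"
    using normal_moment_even[OF assms, of 0 k] by simp
  moreover have "AE y in lborel. 0 \<le> normal_density 0 s y" by (simp add: normal_density_nonneg)
  ultimately show "integrable (gauss s) (\<lambda>y. y ^ (2 * k))"
    and "(\<integral>y. y ^ (2 * k) \<partial>gauss s) = fact (2 * k) / ((2 / s\<^sup>2) ^ k * fact k)"
    unfolding gauss_def has_bochner_integral_iff
    by (simp_all add: integrable_density integral_density)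
qed

lemma PiM_gauss_even_monomial:
  fixes n :: "'i \<Rightarrow> nat"
  assumes "finite I" "0 < s"
  shows "integrable (PiM I (\<lambda>_. gauss s)) (\<lambda>x. \<Prod>k\<in>I. x k ^ (2 * n k))"
    and "(\<integral>x. (\<Prod>k\<in>I. x k ^ (2 * n k)) \<partial>PiM I (\<lambda>_. gauss s))
           = (\<Prod>k\<in>I. fact (2 * n k) / ((2 / s\<^sup>2) ^ n k * fact (n k)))"
proof -
  interpret product_sigma_finite "\<lambda>_::'i. gauss s"
    unfolding product_sigma_finite_def
    using prob_space_gauss[OF \<open>0 < s\<close>] by (simp add: prob_space_imp_sigma_finite)
  show "integrable (PiM I (\<lambda>_. gauss s)) (\<lambda>x. \<Prod>k\<in>I. x k ^ (2 * n k))"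
    using assms gauss_even_moment by (intro product_integrable_prod) auto
  show "(\<integral>x. (\<Prod>k\<in>I. x k ^ (2 * n k)) \<partial>PiM I (\<lambda>_. gauss s))
      = (\<Prod>k\<in>I. fact (2 * n k) / ((2 / s\<^sup>2) ^ n k * fact (n k)))"
    using assms gauss_even_moment by (simp add: product_integral_prod[where f="\<lambda>k y. y ^ (2 * n k)"])
qed

lemma PiM_gauss_moments:
  assumes "finite I" "0 < s" "i \<in> I" "j \<in> I"
  shows "integrable (PiM I (\<lambda>_. gauss s)) (\<lambda>x. (x i)\<^sup>2)"
    and "(\<integral>x. (x i)\<^sup>2 \<partial>PiM I (\<lambda>_. gauss s)) = s\<^sup>2"
    and "integrable (PiM I (\<lambda>_. gauss s)) (\<lambda>x. (x i * x j)\<^sup>2)"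
    and "(\<integral>x. (x i * x j)\<^sup>2 \<partial>PiM I (\<lambda>_. gauss s)) = (if i = j then 3 else 1) * s ^ 4"
proof -
  \<comment> \<open>\<open>(x i * x j)\<^sup>2\<close> is the even monomial with exponent vector \<open>e i + e j\<close>\<close>
  define e :: "'a \<Rightarrow> 'a \<Rightarrow> nat" where "e l k = (if k = l then 1 else 0)" for l k
  have delta: "(\<Prod>k\<in>I. f k ^ (2 * e l k)) = f l ^ 2" if "l \<in> I" for f :: "'a \<Rightarrow> real" and l
    using that \<open>finite I\<close> by (simp add: e_def if_distrib prod.delta cong: if_cong)
  have m1: "fact (2 * e l k) / ((2 / s\<^sup>2) ^ e l k * fact (e l k)) = (if k = l then s\<^sup>2 else 1)" for l k
    by (simp add: e_def)
  have m2: "fact (2 * (e l k + e l k)) / ((2 / s\<^sup>2) ^ (e l k + e l k) * fact (e l k + e l k))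
      = (if k = l then 3 * s ^ 4 else 1)" for l k
    by (simp add: e_def fact_numeral power2_eq_square power4_eq_xxxx)
  note mono = PiM_gauss_even_monomial[OF \<open>finite I\<close> \<open>0 < s\<close>]
  show "integrable (PiM I (\<lambda>_. gauss s)) (\<lambda>x. (x i)\<^sup>2)"
    and "(\<integral>x. (x i)\<^sup>2 \<partial>PiM I (\<lambda>_. gauss s)) = s\<^sup>2"
    using mono[of "e i"] delta[OF \<open>i \<in> I\<close>] \<open>finite I\<close> \<open>i \<in> I\<close> by (simp_all add: m1 prod.delta)
  have pair: "(\<Prod>k\<in>I. x k ^ (2 * (e i k + e j k))) = (x i * x j)\<^sup>2" for x :: "'a \<Rightarrow> real"
    using delta[OF \<open>i \<in> I\<close>] delta[OF \<open>j \<in> I\<close>]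
    by (simp add: distrib_left power_add prod.distrib power_mult_distrib)
  show "integrable (PiM I (\<lambda>_. gauss s)) (\<lambda>x. (x i * x j)\<^sup>2)"
    using mono(1)[of "\<lambda>k. e i k + e j k", unfolded pair] .
  have "(\<Prod>k\<in>I. fact (2 * (e i k + e j k)) / ((2 / s\<^sup>2) ^ (e i k + e j k) * fact (e i k + e j k)))
      = (if i = j then 3 else 1) * s ^ 4"
  proof (cases "i = j")
    case True
    show ?thesis unfolding True m2 using \<open>finite I\<close> \<open>j \<in> I\<close> by simp
  next
    case False
    then have "fact (2 * (e i k + e j k)) / ((2 / s\<^sup>2) ^ (e i k + e j k) * fact (e i k + e j k))
        = (if k = i then s\<^sup>2 else 1) * (if k = j then s\<^sup>2 else 1)" for k
      by (simp add: e_def)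
    then show ?thesis
      using \<open>finite I\<close> \<open>i \<in> I\<close> \<open>j \<in> I\<close> False
      by (simp add: prod.distrib prod.delta power2_eq_square power4_eq_xxxx)
  qed
  then show "(\<integral>x. (x i * x j)\<^sup>2 \<partial>PiM I (\<lambda>_. gauss s)) = (if i = j then 3 else 1) * s ^ 4"
    using mono(2)[of "\<lambda>k. e i k + e j k", unfolded pair] by simp
qed

lemma (in prob_space) integral_pair_fst:
  fixes f :: "'b \<Rightarrow> 'c::{banach, second_countable_topology}"
  assumes [measurable]: "f \<in> borel_measurable N"
  shows "integrable (N \<Otimes>\<^sub>M M) (\<lambda>\<omega>. f (fst \<omega>)) \<longleftrightarrow> integrable N f"
    and "(\<integral>\<omega>. f (fst \<omega>) \<partial>(N \<Otimes>\<^sub>M M)) = (\<integral>x. f x \<partial>N)"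
  using integrable_distr_eq[of fst "N \<Otimes>\<^sub>M M" N f] integral_distr[of fst "N \<Otimes>\<^sub>M M" N f]
  by (simp_all add: distr_pair_fst)

lemma prob_space_spk_space: "0 < d \<Longrightarrow> prob_space (spk_space d)"
  unfolding spk_space_def by (intro prob_space_pair prob_space_PiM prob_space_gauss) auto

lemma spk_space_uvec_moments:
  assumes "0 < d" "i < d" "j < d"
  shows "integrable (spk_space d) (\<lambda>\<omega>. (uvec \<omega> i)\<^sup>2)"
    and "(\<integral>\<omega>. (uvec \<omega> i)\<^sup>2 \<partial>spk_space d) = 1 / real d"
    and "integrable (spk_space d) (\<lambda>\<omega>. (uvec \<omega> i * uvec \<omega> j)\<^sup>2)"
    and "(\<integral>\<omega>. (uvec \<omega> i * uvec \<omega> j)\<^sup>2 \<partial>spk_space d) = (if i = j then 3 else 1) / (real d)\<^sup>2"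
proof -
  let ?s = "sqrt (1 / real d)"
  let ?U = "PiM {..<d} (\<lambda>_. gauss ?s)"
  let ?R = "PiM {..<d} (\<lambda>_. gauss ?s) \<Otimes>\<^sub>M
      PiM (upper_idx d) (\<lambda>p. gauss (if fst p = snd p then sqrt (2 / real d) else ?s))"
  interpret R: prob_space ?R
    using \<open>0 < d\<close> by (intro prob_space_pair prob_space_PiM prob_space_gauss) auto
  have s2: "?s\<^sup>2 = 1 / real d" and s4: "?s ^ 4 = 1 / (real d)\<^sup>2"
    using \<open>0 < d\<close> by (simp_all add: power4_eq_xxxx power2_eq_square)
  have ij: "i \<in> {..<d}" "j \<in> {..<d}" using assms by simp_all
  note moments = PiM_gauss_moments[OF _ _ ij] \<open>0 < d\<close>
  have "(\<lambda>x. (x i)\<^sup>2) \<in> borel_measurable ?U" "(\<lambda>x. (x i * x j)\<^sup>2) \<in> borel_measurable ?U"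
    using ij by simp_all
  note marginal = R.integral_pair_fst[OF this(1)] R.integral_pair_fst[OF this(2)]
  show "integrable (spk_space d) (\<lambda>\<omega>. (uvec \<omega> i)\<^sup>2)"
    and "(\<integral>\<omega>. (uvec \<omega> i)\<^sup>2 \<partial>spk_space d) = 1 / real d"
    and "integrable (spk_space d) (\<lambda>\<omega>. (uvec \<omega> i * uvec \<omega> j)\<^sup>2)"
    and "(\<integral>\<omega>. (uvec \<omega> i * uvec \<omega> j)\<^sup>2 \<partial>spk_space d) = (if i = j then 3 else 1) / (real d)\<^sup>2"
    unfolding spk_space_def uvec_def using marginal moments s2 s4 by simp_all
qed

lemma spk_space_norm_sq: "0 < d \<Longrightarrow> (\<integral>\<omega>. (\<Sum>i<d. (uvec \<omega> i)\<^sup>2) \<partial>spk_space d) = 1"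
  using spk_space_uvec_moments(1,2) by (simp add: Bochner_Integration.integral_sum)

lemma spk_space_sum_outer_sq:
  assumes "0 < d"
  shows "(\<Sum>i<d. \<Sum>j<d. \<integral>\<omega>. (uvec \<omega> i * uvec \<omega> j)\<^sup>2 \<partial>spk_space d) = 1 + 2 / real d"
proof -
  have "(\<Sum>i<d. \<Sum>j<d. \<integral>\<omega>. (uvec \<omega> i * uvec \<omega> j)\<^sup>2 \<partial>spk_space d)
      = (\<Sum>i<d. \<Sum>j<d. 1 / (real d)\<^sup>2 + (if i = j then 2 / (real d)\<^sup>2 else 0))"
    using spk_space_uvec_moments(4)[OF assms] by (intro sum.cong) auto
  also have "\<dots> = real d * (real d / (real d)\<^sup>2 + 2 / (real d)\<^sup>2)"
    by (simp add: sum.distrib)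
  also have "\<dots> = 1 + 2 / real d"
    using assms by (simp add: power2_eq_square field_simps)
  finally show ?thesis .
qed

lemma uvec_measurable [measurable]:
  "i < d \<Longrightarrow> (\<lambda>\<omega>. uvec \<omega> i) \<in> borel_measurable (spk_space d)"
  unfolding spk_space_def uvec_def by measurable

lemma zvec_measurable [measurable]:
  "i < d \<Longrightarrow> (\<lambda>\<omega>. zvec \<omega> i) \<in> borel_measurable (spk_space d)"
  unfolding spk_space_def zvec_def by measurable

lemma Wmat_measurable [measurable]:
  assumes "i < d" "j < d"
  shows "(\<lambda>\<omega>. Wmat \<omega> i j) \<in> borel_measurable (spk_space d)"
proof (cases "i \<le> j")
  case True
  then have "(i, j) \<in> upper_idx d" using assms by (simp add: upper_idx_def)
  then show ?thesis using True unfolding spk_space_def Wmat_def by simp measurable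
next
  case False
  then have "(j, i) \<in> upper_idx d" using assms by (simp add: upper_idx_def)
  then show ?thesis using False unfolding spk_space_def Wmat_def by simp measurable
qed

lemma obs_measurable: "obs d lam tau0 \<in> spk_space d \<rightarrow>\<^sub>M obs_space d"
  unfolding obs_def obs_space_def Mmat_def bvec_def by measurable

lemma subalgebra_obs_sigma: "subalgebra (spk_space d) (obs_sigma d lam tau0)"
  unfolding subalgebra_def obs_sigma_def
  using sets_image_in_sets[OF refl obs_measurable] by simp

lemma estimate_measurable_obs_sigma:
  assumes "uhat \<in> obs_space d \<rightarrow>\<^sub>M PiM {..<d} (\<lambda>_. borel)" "i < d"
  shows "(\<lambda>\<omega>. uhat (obs d lam tau0 \<omega>) i) \<in> borel_measurable (obs_sigma d lam tau0)"
proof -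
  have "obs d lam tau0 \<in> space (spk_space d) \<rightarrow> space (obs_space d)"
    using measurable_space[OF obs_measurable] by blast
  moreover have "(\<lambda>x. uhat x i) \<in> borel_measurable (obs_space d)"
    using measurable_compose[OF assms(1) measurable_component_singleton] assms(2) by simp
  ultimately show ?thesis
    unfolding obs_sigma_def by (rule measurable_compose[OF measurable_vimage_algebra1])
qed

lemma spk_space_overlap_le:
  fixes uhat :: "(nat \<Rightarrow> nat \<Rightarrow> real) \<times> (nat \<Rightarrow> real) \<Rightarrow> nat \<Rightarrow> real"
  assumes "0 < d"
    and uhat: "uhat \<in> obs_space d \<rightarrow>\<^sub>M PiM {..<d} (\<lambda>_. borel)"
    and unit: "\<And>x. x \<in> space (obs_space d) \<Longrightarrow> (\<Sum>i<d. (uhat x i)\<^sup>2) = 1"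
  shows "integral\<^sup>L (spk_space d)
       (real_cond_exp (spk_space d) (obs_sigma d lam tau0)
          (\<lambda>\<omega>. (\<Sum>i<d. uhat (obs d lam tau0 \<omega>) i * uvec \<omega> i)\<^sup>2))
     \<le> sqrt ((integral\<^sup>L (spk_space d) (\<lambda>\<omega>. \<Sum>i<d. (uvec \<omega> i)\<^sup>2))\<^sup>2
              - integral\<^sup>L (spk_space d) (MMSE d lam tau0))
       + 2 * sqrt 2 * real d powr (- (1/2))"
proof -
  let ?M = "spk_space d" and ?F = "obs_sigma d lam tau0"
  let ?E = "integral\<^sup>L ?M (MMSE d lam tau0)"
  interpret prob_space ?M using prob_space_spk_space[OF \<open>0 < d\<close>] .
  define h where "h i \<omega> = uhat (obs d lam tau0 \<omega>) i" for i \<omega>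
  define X where "X i j \<omega> = uvec \<omega> i * uvec \<omega> j" for i j \<omega>
  have h_unit: "(\<Sum>i<d. (h i \<omega>)\<^sup>2) = 1" if "\<omega> \<in> space ?M" for \<omega>
    unfolding h_def using unit measurable_space[OF obs_measurable that] by blast
  have "(\<lambda>\<omega>. (\<Sum>i<d. uhat (obs d lam tau0 \<omega>) i * uvec \<omega> i)\<^sup>2)
      = (\<lambda>\<omega>. \<Sum>i<d. \<Sum>j<d. h i \<omega> * h j \<omega> * X i j \<omega>)"
    unfolding h_def X_def by (simp add: power2_eq_square sum_product mult_ac)
  moreover have "MMSE d lam tau0 = real_cond_exp ?M ?F
      (\<lambda>\<omega>. \<Sum>i<d. \<Sum>j<d. (X i j \<omega> - real_cond_exp ?M ?F (X i j) \<omega>)\<^sup>2)"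
    unfolding MMSE_def X_def ..
  moreover have "integral\<^sup>L ?M (real_cond_exp ?M ?F (\<lambda>\<omega>. \<Sum>i<d. \<Sum>j<d. h i \<omega> * h j \<omega> * X i j \<omega>))
      \<le> sqrt ((\<Sum>i<d. \<Sum>j<d. \<integral>\<omega>. (X i j \<omega>)\<^sup>2 \<partial>?M)
        - integral\<^sup>L ?M (real_cond_exp ?M ?F
            (\<lambda>\<omega>. \<Sum>i<d. \<Sum>j<d. (X i j \<omega> - real_cond_exp ?M ?F (X i j) \<omega>)\<^sup>2)))"
    using estimate_measurable_obs_sigma[OF uhat] h_unit spk_space_uvec_moments(3)[OF \<open>0 < d\<close>]
    by (intro integral_cond_exp_overlap_le_sqrt[OF subalgebra_obs_sigma]) (auto simp: h_def X_def)
  ultimately have "integral\<^sup>L ?M (real_cond_exp ?M ?F (\<lambda>\<omega>. (\<Sum>i<d. uhat (obs d lam tau0 \<omega>) i * uvec \<omega> i)\<^sup>2))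
      \<le> sqrt (1 + 2 / real d - ?E)"
    using spk_space_sum_outer_sq[OF \<open>0 < d\<close>] by (simp add: X_def)
  also have "\<dots> \<le> sqrt (1 - ?E) + 2 * sqrt (2 / real d)"
    using sqrt_le_sqrt_diff_add[where \<delta>="2 / real d" and S="1 + 2 / real d - ?E"] by simp
  also have "sqrt (2 / real d) = sqrt 2 * real d powr (- (1/2))"
    using \<open>0 < d\<close> by (simp add: real_sqrt_divide powr_minus_divide powr_half_sqrt)
  finally show ?thesis
    using spk_space_norm_sq[OF \<open>0 < d\<close>] by (simp add: mult.assoc)
qed

theorem lemma1:
  "\<exists>c1>0. \<exists>c2>0. \<forall>(lam::real) (tau0::real) (d::nat)
      (uhat :: (nat \<Rightarrow> nat \<Rightarrow> real) \<times> (nat \<Rightarrow> real) \<Rightarrow> nat \<Rightarrow> real).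
     1 < lam \<and> lam \<le> 2 \<and> 0 < tau0 \<and> tau0 \<le> 2 \<and> 0 < d \<and>
     uhat \<in> obs_space d \<rightarrow>\<^sub>M PiM {..<d} (\<lambda>_. borel) \<and>
     (\<forall>x\<in>space (obs_space d). (\<Sum>i<d. (uhat x i)\<^sup>2) = 1)
     \<longrightarrow>
     integral\<^sup>L (spk_space d)
       (real_cond_exp (spk_space d) (obs_sigma d lam tau0)
          (\<lambda>\<omega>. (\<Sum>i<d. uhat (obs d lam tau0 \<omega>) i * uvec \<omega> i)\<^sup>2))
     \<le> sqrt ((integral\<^sup>L (spk_space d) (\<lambda>\<omega>. \<Sum>i<d. (uvec \<omega> i)\<^sup>2))\<^sup>2
              - integral\<^sup>L (spk_space d) (MMSE d lam tau0))
       + c1 * real d powr (- c2)"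
  by (rule exI[of _ "2 * sqrt 2"], simp, rule exI[of _ "1/2"], simp) (blast intro: spk_space_overlap_le)

end
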